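(* Let $n\ge4$, let $c,\gamma\in\mathbb{F}_{2^n}\setminus\{0,1\}$, and let $F=\mathrm{Inv}\circ(0,1,\gamma)$. Then $3\le{}_c\Delta_F\le5$.
   Context: $\mathrm{Inv}(x)=x^{2^n-2}$ on $\mathbb{F}_{2^n}$. $(0,1,\gamma)$ is the $3$-cycle sending $0\mapsto1$, $1\mapsto\gamma$, $\gamma\mapsto0$ and fixing all other elements; thus $F(0)=1$, $F(1)=\gamma^{-1}$, $F(\gamma)=0$ and $F(x)=x^{-1}$ otherwise. For $c\in\mathbb{F}_{2^n}$, ${}_cD_aF(x)=F(x+a)+cF(x)$; ${}_c\Delta_F(a,b)$ is the number of $x\in\mathbb{F}_{2^n}$ with ${}_cD_aF(x)=b$; and ${}_c\Delta_F=\max\{{}_c\Delta_F(a,b): a,b\in\mathbb{F}_{2^n},\ a\neq 0 \text{ if } c=1\}$. *)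

theory Defs
  imports Main "HOL-Library.Cardinality"
begin

text \<open>The field F_{2^n} is modelled as an arbitrary finite field type 'a with
  CARD('a) = 2^n (unique up to isomorphism).\<close>

definition Inv :: "'a::{field,finite} \<Rightarrow> 'a" where
  "Inv x = x ^ (CARD('a) - 2)"

definition cyc3 :: "'a::field \<Rightarrow> 'a \<Rightarrow> 'a" where
  "cyc3 \<gamma> x = (if x = 0 then 1 else if x = 1 then \<gamma> else if x = \<gamma> then 0 else x)"

definition cDeltaAt :: "('a::{field,finite} \<Rightarrow> 'a) \<Rightarrow> 'a \<Rightarrow> 'a \<Rightarrow> 'a \<Rightarrow> nat" where
  "cDeltaAt F c a b = card {x. F (x + a) + c * F x = b}"

definition cDelta :: "('a::{field,finite} \<Rightarrow> 'a) \<Rightarrow> 'a \<Rightarrow> nat" where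
  "cDelta F c = Max {cDeltaAt F c a b | a b. a \<noteq> 0 \<or> c \<noteq> 1}"

end

theory Submission
  imports Defs "HOL-Computational_Algebra.Polynomial"
begin

text \<open>
  Write \<open>F = inverse \<circ> cyc3 \<gamma>\<close> (this is \<open>Inv \<circ> (0, 1, \<gamma>)\<close> once the field has more than two
  elements). For \<open>a \<noteq> 0\<close>, two solutions of \<open>F (x + a) + c F x = b\<close> never lie in one coset
  \<open>{z, z + a}\<close>, since \<open>F\<close> is injective and \<open>c \<noteq> 1\<close>. Outside the three cosets meeting
  \<open>{0, 1, \<gamma>}\<close> the map \<open>F\<close> is plain inversion and the equation becomes a nondegenerate
  quadratic in \<open>x\<close>, so there are at most \<open>1 + 1 + 1 + 2 = 5\<close> solutions (and at most one
  for \<open>a = 0\<close>).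

  For the lower bound, \<open>x = \<gamma>\<close> solves the equation with \<open>b = 1 / (\<gamma> + a)\<close>, and the
  generic solutions form a conic in \<open>(a, x)\<close> through the origin. Its rational
  parametrisation gives, for \<open>D = t\<^sup>2 + c t + c\<close>, the shift \<open>a = \<gamma> t (t + 1 + c) / D\<close> with
  the two further solutions \<open>\<gamma> t (t + c) / D\<close> and \<open>c \<gamma> (t + 1 + c) / D\<close>. This fails only
  when \<open>t\<close> is a root of one of fifteen quadratics, so some \<open>t\<close> works as soon as the field
  has 32 or more elements. The field with 16 elements is settled by computation in the model
  \<open>\<bbbF>\<^sub>2[\<alpha>]/(\<alpha>\<^sup>4 + \<alpha> + 1)\<close>, using a table of witnesses.
\<close>

section \<open>Finite fields and c-differential uniformity\<close>

lemma char2_add_self: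
  fixes x :: "'a::comm_ring_1"
  assumes "1 + 1 = (0::'a)"
  shows "x + x = 0"
proof -
  have "x + x = x * (1 + 1)" by (simp add: algebra_simps)
  with assms show ?thesis by simp
qed

lemma char2_add_eq_0_iff:
  fixes x y :: "'a::comm_ring_1"
  assumes "1 + 1 = (0::'a)"
  shows "x + y = 0 \<longleftrightarrow> x = y"
  by (metis add_diff_cancel_right' assms char2_add_self diff_add_cancel)

lemma power_card_minus_one:
  fixes x :: "'a::{field,finite}"
  assumes "x \<noteq> 0"
  shows "x ^ (CARD('a) - 1) = 1"
proof -
  let ?U = "UNIV - {0::'a}"
  have "bij_betw ((*) x) ?U ?U"
    by (rule bij_betw_byWitness[where f' = "\<lambda>y. y / x"]) (use assms in auto)
  then have "(\<Prod>y\<in>?U. x * y) = (\<Prod>y\<in>?U. y)"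
    using prod.reindex_bij_betw[of "(*) x" ?U ?U id] by simp
  moreover have "(\<Prod>y\<in>?U. x * y) = x ^ (CARD('a) - 1) * (\<Prod>y\<in>?U. y)"
    by (simp add: prod.distrib card_Diff_subset)
  moreover have "(\<Prod>y\<in>?U. y) \<noteq> 0" by simp
  ultimately show ?thesis by simp
qed

lemma power_card_eq_self:
  fixes x :: "'a::{field,finite}"
  shows "x ^ CARD('a) = x"
proof (cases "x = 0")
  case False
  have "CARD('a) = Suc (CARD('a) - 1)"
    using finite_UNIV_card_ge_0[where 'a = 'a] by simp
  then show ?thesis using power_card_minus_one[OF False] by (metis mult.right_neutral power_Suc)
qed simp

lemma Inv_eq_inverse:
  fixes x :: "'a::{field,finite}"
  assumes "2 < CARD('a)"
  shows "Inv x = inverse x"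
proof (cases "x = 0")
  case True
  with assms show ?thesis by (simp add: Inv_def)
next
  case False
  have "CARD('a) - 1 = Suc (CARD('a) - 2)" using assms by simp
  then have "x * Inv x = x ^ (CARD('a) - 1)" by (simp add: Inv_def)
  with power_card_minus_one[OF False] have "x * Inv x = 1" by simp
  with False show ?thesis by (simp add: field_simps)
qed

lemma inj_cyc3:
  fixes \<gamma> :: "'a::field"
  assumes "\<gamma> \<noteq> 0" "\<gamma> \<noteq> 1"
  shows "inj (cyc3 \<gamma>)"
  using assms unfolding inj_def cyc3_def by (auto split: if_splits)

lemma card_quadratic_roots_le:
  fixes A B C :: "'a::idom"
  assumes "A \<noteq> 0 \<or> B \<noteq> 0 \<or> C \<noteq> 0"
  shows "card {t. A * t^2 + B * t + C = 0} \<le> 2"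
proof -
  have roots: "{t. A * t^2 + B * t + C = 0} = {t. poly [:C, B, A:] t = 0}"
    by (auto simp: algebra_simps power2_eq_square)
  have "[:C, B, A:] \<noteq> 0" using assms by auto
  then have "card {t. poly [:C, B, A:] t = 0} \<le> degree [:C, B, A:]"
    by (rule card_poly_roots_bound)
  also have "degree [:C, B, A:] \<le> 2" by simp
  finally show ?thesis by (simp only: roots)
qed

lemma card_solutions_quadratic_le:
  fixes X Y :: "'a::idom \<Rightarrow> 'a"
  assumes "\<And>t. X t - Y t = A * t^2 + B * t + C" and "A \<noteq> 0 \<or> B \<noteq> 0 \<or> C \<noteq> 0"
  shows "card {t. X t = Y t} \<le> 2"
proof -
  have "{t. X t = Y t} = {t. A * t^2 + B * t + C = 0}"
    using assms(1) by (metis eq_iff_diff_eq_0)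
  with card_quadratic_roots_le[OF assms(2)] show ?thesis by simp
qed

lemma ex_avoiding_small_sets:
  fixes Ss :: "'a::finite set list"
  assumes "\<forall>S \<in> set Ss. card S \<le> k" and "k * length Ss < CARD('a)"
  shows "\<exists>t. \<forall>S \<in> set Ss. t \<notin> S"
proof -
  have "card (\<Union>(set Ss)) \<le> (\<Sum>S\<in>set Ss. card S)"
    by (rule card_Union_le_sum_card)
  also have "\<dots> \<le> card (set Ss) * k"
    using sum_bounded_above[of "set Ss" card k] assms(1) by simp
  also have "\<dots> < CARD('a)"
    using assms(2) card_length[of Ss] by (metis le_less_trans mult.commute mult_le_mono1)
  finally have "\<Union>(set Ss) \<noteq> UNIV" by auto
  then show ?thesis by blast
qed

lemma cDelta_le:
  fixes F :: "'a::{field,finite} \<Rightarrow> 'a"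
  assumes "\<And>a b. a \<noteq> 0 \<or> c \<noteq> 1 \<Longrightarrow> cDeltaAt F c a b \<le> m"
  shows "cDelta F c \<le> m"
proof -
  let ?M = "{cDeltaAt F c a b | a b. a \<noteq> 0 \<or> c \<noteq> 1}"
  have "finite ?M"
    by (rule finite_subset[of _ "range (\<lambda>(a, b). cDeltaAt F c a b)"]) auto
  moreover have "cDeltaAt F c 1 0 \<in> ?M" by auto
  ultimately show ?thesis
    using assms unfolding cDelta_def by (subst Max_le_iff) auto
qed

lemma le_cDelta:
  fixes F :: "'a::{field,finite} \<Rightarrow> 'a"
  assumes "a \<noteq> 0 \<or> c \<noteq> 1" and "m \<le> cDeltaAt F c a b"
  shows "m \<le> cDelta F c"
proof -
  let ?M = "{cDeltaAt F c a b | a b. a \<noteq> 0 \<or> c \<noteq> 1}"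
  have "finite ?M"
    by (rule finite_subset[of _ "range (\<lambda>(a, b). cDeltaAt F c a b)"]) auto
  with assms show ?thesis
    unfolding cDelta_def by (intro Max_ge_iff[THEN iffD2]) auto
qed

section \<open>The upper bound\<close>

lemma card_cdiff_solutions_in_pair_le_1:
  fixes F :: "'a::field \<Rightarrow> 'a"
  assumes char2: "1 + 1 = (0::'a)" and "inj F" "c \<noteq> 1" "a \<noteq> 0"
  shows "card ({x. F (x + a) + c * F x = b} \<inter> {z, z + a}) \<le> 1"
proof -
  have False if "F (z + a) + c * F z = b" and "F (z + a + a) + c * F (z + a) = b"
  proof -
    have "z + a + a = z" using char2_add_self[OF char2, of a] by (simp add: add.assoc)
    with that(2) have "F z + c * F (z + a) = b" by simp
    moreover have "(F (z + a) - F z) * (1 - c) = (F (z + a) + c * F z) - (F z + c * F (z + a))"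
      by (simp add: algebra_simps)
    ultimately have "(F (z + a) - F z) * (1 - c) = 0" using that(1) by simp
    with \<open>c \<noteq> 1\<close> have "F (z + a) = F z" by simp
    with \<open>inj F\<close> have "z + a = z" by (rule injD)
    with \<open>a \<noteq> 0\<close> show False by simp
  qed
  then show ?thesis unfolding One_nat_def by (subst card_le_Suc0_iff_eq) (simp, blast)
qed

lemma cDeltaAt_zero_shift_le_1:
  fixes F :: "'a::{field,finite} \<Rightarrow> 'a"
  assumes char2: "1 + 1 = (0::'a)" and "inj F" "c \<noteq> 1"
  shows "cDeltaAt F c 0 b \<le> 1"
proof -
  have "1 + c \<noteq> 0" using \<open>c \<noteq> 1\<close> char2_add_eq_0_iff[OF char2, of 1 c] by simp
  then have "x = y" if "(1 + c) * F x = b" "(1 + c) * F y = b" for x y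
    using that injD[OF \<open>inj F\<close>] by fastforce
  moreover have "{x. F (x + 0) + c * F x = b} = {x. (1 + c) * F x = b}"
    by (simp add: algebra_simps)
  ultimately show ?thesis
    unfolding cDeltaAt_def One_nat_def by (subst card_le_Suc0_iff_eq) (simp, blast)
qed

lemma inverse_cyc3_solution_quadratic:
  fixes \<gamma> :: "'a::field"
  assumes "x \<notin> {0, 1, \<gamma>}" "x + a \<notin> {0, 1, \<gamma>}"
    and "inverse (cyc3 \<gamma> (x + a)) + c * inverse (cyc3 \<gamma> x) = b"
  shows "b * x^2 + (b * a - 1 - c) * x - c * a = 0"
proof -
  have "inverse (x + a) + c * inverse x = b"
    using assms by (simp add: cyc3_def)
  moreover have "x \<noteq> 0" "x + a \<noteq> 0" using assms(1,2) by auto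
  ultimately have "x + c * (x + a) = b * (x * (x + a))" by (simp add: field_simps)
  then show ?thesis by (simp add: algebra_simps power2_eq_square)
qed

lemma cDeltaAt_inverse_cyc3_le_5:
  fixes c \<gamma> :: "'a::{field,finite}"
  assumes char2: "1 + 1 = (0::'a)"
    and "c \<noteq> 0" "c \<noteq> 1" "\<gamma> \<noteq> 0" "\<gamma> \<noteq> 1"
  shows "cDeltaAt (inverse \<circ> cyc3 \<gamma>) c a b \<le> 5"
proof -
  have inj: "inj (inverse \<circ> cyc3 \<gamma>)"
    using inj_cyc3[OF \<open>\<gamma> \<noteq> 0\<close> \<open>\<gamma> \<noteq> 1\<close>] by (simp add: inj_def)
  show ?thesis
  proof (cases "a = 0")
    case True
    have "cDeltaAt (inverse \<circ> cyc3 \<gamma>) c 0 b \<le> 1"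
      by (rule cDeltaAt_zero_shift_le_1[OF char2 inj \<open>c \<noteq> 1\<close>])
    with True show ?thesis by simp
  next
    case False
    let ?S = "{x. (inverse \<circ> cyc3 \<gamma>) (x + a) + c * (inverse \<circ> cyc3 \<gamma>) x = b}"
    let ?P = "\<lambda>z. ?S \<inter> {z, z + a}"
    let ?Q = "{x. b * x^2 + (b * a - 1 - c) * x - c * a = 0}"
    have "?S \<subseteq> ?P 0 \<union> ?P 1 \<union> ?P \<gamma> \<union> ?Q"
    proof
      fix x assume x: "x \<in> ?S"
      show "x \<in> ?P 0 \<union> ?P 1 \<union> ?P \<gamma> \<union> ?Q"
      proof (cases "x \<in> {0, 1, \<gamma>} \<or> x + a \<in> {0, 1, \<gamma>}")
        case True
        have "x = e + a" if "x + a = e" for e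
          using that char2_add_self[OF char2, of a] by (metis add.assoc add_0_right)
        with True have "x \<in> {0, 0 + a, 1, 1 + a, \<gamma>, \<gamma> + a}" by blast
        with x show ?thesis by blast
      next
        case False
        with x inverse_cyc3_solution_quadratic[of x \<gamma> a c b] show ?thesis by simp
      qed
    qed
    then have "card ?S \<le> card (?P 0 \<union> ?P 1 \<union> ?P \<gamma> \<union> ?Q)"
      by (intro card_mono) simp_all
    also have "\<dots> \<le> card (?P 0) + card (?P 1) + card (?P \<gamma>) + card ?Q"
      using card_Un_le[of "?P 0 \<union> ?P 1 \<union> ?P \<gamma>" ?Q] card_Un_le[of "?P 0 \<union> ?P 1" "?P \<gamma>"]
        card_Un_le[of "?P 0" "?P 1"] by linarith
    also have "\<dots> \<le> 1 + 1 + 1 + 2"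
    proof -
      have "card (?P z) \<le> 1" for z
        by (rule card_cdiff_solutions_in_pair_le_1[OF char2 inj \<open>c \<noteq> 1\<close> False])
      moreover have "card ?Q \<le> 2"
        using card_quadratic_roots_le[of b "b * a - 1 - c" "- (c * a)"] \<open>c \<noteq> 0\<close> False by simp
      ultimately show ?thesis by (intro add_mono)
    qed
    finally show ?thesis by (simp add: cDeltaAt_def)
  qed
qed
section \<open>Three solutions from a rational parametrisation\<close>

text \<open>With \<open>D = t\<^sup>2 + c t + c\<close>, the points that have to avoid the exceptional points
  \<open>0, 1, \<gamma>\<close> of \<^const>\<open>cyc3\<close> are \<open>\<gamma> u / D\<close> for the five listed \<open>u\<close>: the solutions
  \<open>\<gamma> t (t + c) / D\<close>, \<open>c \<gamma> (t + 1 + c) / D\<close> and the three translates by the shift.\<close>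
definition admissible_parameter :: "'a::field \<Rightarrow> 'a \<Rightarrow> 'a \<Rightarrow> bool" where
  "admissible_parameter c \<gamma> t \<longleftrightarrow>
     (let D = t^2 + c * t + c in
      t \<noteq> 0 \<and> t + c \<noteq> 0 \<and> t + 1 + c \<noteq> 0 \<and> D \<noteq> 0 \<and> t * (t + c) \<noteq> c * (t + 1 + c) \<and>
      (\<forall>u \<in> {t + c, t * (t + c), t, c * (t + 1 + c), (t + c) * (t + 1 + c)}. \<gamma> * u \<noteq> D \<and> u \<noteq> D))"

lemma ex_admissible_parameter:
  fixes c \<gamma> :: "'a::{field,finite}"
  assumes "c \<noteq> 0" "\<gamma> \<noteq> 1" "30 < CARD('a)"
  shows "\<exists>t. admissible_parameter c \<gamma> t"
proof -
  define D where "D t = t^2 + c * t + c" for t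
  let ?bad = "[{t. t = 0}, {t. t + c = 0}, {t. t + 1 + c = 0}, {t. D t = 0},
    {t. t * (t + c) = c * (t + 1 + c)},
    {t. \<gamma> * (t + c) = D t}, {t. t + c = D t},
    {t. \<gamma> * (t * (t + c)) = D t}, {t. t * (t + c) = D t},
    {t. \<gamma> * t = D t}, {t. t = D t},
    {t. \<gamma> * (c * (t + 1 + c)) = D t}, {t. c * (t + 1 + c) = D t},
    {t. \<gamma> * ((t + c) * (t + 1 + c)) = D t}, {t. (t + c) * (t + 1 + c) = D t}]"
  have "\<forall>S \<in> set ?bad. card S \<le> 2"
    apply (simp only: list.set ball_simps insert_iff empty_iff simp_thms)
    apply (intro conjI)
    subgoal unfolding D_def
      by (rule card_solutions_quadratic_le[where A = 0 and B = 1 and C = 0])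
        (algebra, simp add: assms)
    subgoal unfolding D_def
      by (rule card_solutions_quadratic_le[where A = 0 and B = 1 and C = c])
        (algebra, simp add: assms)
    subgoal unfolding D_def
      by (rule card_solutions_quadratic_le[where A = 0 and B = 1 and C = "1 + c"])
        (algebra, simp add: assms)
    subgoal unfolding D_def
      by (rule card_solutions_quadratic_le[where A = 1 and B = c and C = c])
        (algebra, simp add: assms)
    subgoal unfolding D_def
      by (rule card_solutions_quadratic_le[where A = 1 and B = 0 and C = "- c - c^2"])
        (algebra, simp add: assms)
    subgoal unfolding D_def
      by (rule card_solutions_quadratic_le[where A = "-1" and B = "\<gamma> - c" and C = "\<gamma> * c - c"])
        (algebra, simp add: assms)
    subgoal unfolding D_def
      by (rule card_solutions_quadratic_le[where A = "-1" and B = "1 - c" and C = 0])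
        (algebra, simp add: assms)
    subgoal unfolding D_def
      by (rule card_solutions_quadratic_le[where A = "\<gamma> - 1" and B = "\<gamma> * c - c" and C = "- c"])
        (algebra, simp add: assms)
    subgoal unfolding D_def
      by (rule card_solutions_quadratic_le[where A = 0 and B = 0 and C = "- c"])
        (algebra, simp add: assms)
    subgoal unfolding D_def
      by (rule card_solutions_quadratic_le[where A = "-1" and B = "\<gamma> - c" and C = "- c"])
        (algebra, simp add: assms)
    subgoal unfolding D_def
      by (rule card_solutions_quadratic_le[where A = "-1" and B = "1 - c" and C = "- c"])
        (algebra, simp add: assms)
    subgoal unfolding D_def
      by (rule card_solutions_quadratic_le[where A = "-1" and B = "\<gamma> * c - c" and C = "\<gamma> * c * (1 + c) - c"])
        (algebra, simp add: assms)
    subgoal unfolding D_def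
      by (rule card_solutions_quadratic_le[where A = "-1" and B = 0 and C = "c^2"])
        (algebra, simp add: assms)
    subgoal unfolding D_def
      by (rule card_solutions_quadratic_le[where A = "\<gamma> - 1" and B = "\<gamma> * (1 + 2 * c) - c" and C = "\<gamma> * c * (1 + c) - c"])
        (algebra, simp add: assms)
    subgoal unfolding D_def
      by (rule card_solutions_quadratic_le[where A = 0 and B = "1 + c" and C = "c^2"])
        (algebra, simp add: assms)
    done
  then obtain t where "\<forall>S \<in> set ?bad. t \<notin> S"
    using ex_avoiding_small_sets[of ?bad 2] assms(3) by auto
  then show ?thesis
    by (auto simp: admissible_parameter_def D_def Let_def)
qed

lemma cyc3_fixes_scaled_quotient:
  fixes \<gamma> u D :: "'a::field"
  assumes "\<gamma> \<noteq> 0" "u \<noteq> 0" "D \<noteq> 0" "\<gamma> * u \<noteq> D" "u \<noteq> D"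
  shows "cyc3 \<gamma> (\<gamma> * u / D) = \<gamma> * u / D"
  using assms by (simp add: cyc3_def field_simps)

lemma three_solutions_of_admissible:
  fixes c \<gamma> t :: "'a::{field,finite}"
  assumes char2: "1 + 1 = (0::'a)" and "c \<noteq> 0" "\<gamma> \<noteq> 0" "\<gamma> \<noteq> 1"
    and adm: "admissible_parameter c \<gamma> t"
  defines "D \<equiv> t^2 + c * t + c"
  shows "3 \<le> cDeltaAt (inverse \<circ> cyc3 \<gamma>) c (\<gamma> * t * (t + 1 + c) / D) (D / (\<gamma> * (t + c)))"
proof -
  define a where "a = \<gamma> * t * (t + 1 + c) / D"
  define b where "b = D / (\<gamma> * (t + c))"
  define x1 where "x1 = \<gamma> * (t * (t + c)) / D"
  define x2 where "x2 = \<gamma> * (c * (t + 1 + c)) / D"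
  have D_eq: "D = t^2 + c * t + c" by (simp add: D_def)
  have t: "t \<noteq> 0" "t + c \<noteq> 0" "t + 1 + c \<noteq> 0" "D \<noteq> 0" "t * (t + c) \<noteq> c * (t + 1 + c)"
    and u: "\<And>u. u \<in> {t + c, t * (t + c), t, c * (t + 1 + c), (t + c) * (t + 1 + c)} \<Longrightarrow>
      \<gamma> * u \<noteq> D \<and> u \<noteq> D"
    using adm unfolding admissible_parameter_def Let_def D_def by auto
  have fixed: "cyc3 \<gamma> (\<gamma> * u / D) = \<gamma> * u / D"
    if "u \<in> {t + c, t * (t + c), t, c * (t + 1 + c), (t + c) * (t + 1 + c)}" for u
    using cyc3_fixes_scaled_quotient[OF \<open>\<gamma> \<noteq> 0\<close> _ \<open>D \<noteq> 0\<close>] u[OF that] that t \<open>c \<noteq> 0\<close>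
    by auto
  have aD: "a * D = \<gamma> * t * (t + 1 + c)" and x1D: "x1 * D = \<gamma> * (t * (t + c))"
    and x2D: "x2 * D = \<gamma> * (c * (t + 1 + c))"
    using \<open>D \<noteq> 0\<close> by (simp_all add: a_def x1_def x2_def)
  have "(\<gamma> + a) * D = \<gamma> * (t + c)"
    using aD D_eq char2_add_self[OF char2, of "\<gamma> * (t^2 + c * t)"] by algebra
  then have shift0: "\<gamma> + a = \<gamma> * (t + c) / D" using \<open>D \<noteq> 0\<close> by (simp add: eq_divide_eq)
  have "(x1 + a) * D = \<gamma> * t"
    using aD x1D char2_add_self[OF char2, of "\<gamma> * t * (t + c)"] by algebra
  then have shift1: "x1 + a = \<gamma> * t / D" using \<open>D \<noteq> 0\<close> by (simp add: eq_divide_eq)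
  have "(x2 + a) * D = \<gamma> * ((t + c) * (t + 1 + c))" using aD x2D by algebra
  then have shift2: "x2 + a = \<gamma> * ((t + c) * (t + 1 + c)) / D" using \<open>D \<noteq> 0\<close> by (simp add: eq_divide_eq)
  have "inverse (cyc3 \<gamma> (\<gamma> + a)) + c * inverse (cyc3 \<gamma> \<gamma>) = b"
    using fixed[of "t + c"] \<open>\<gamma> \<noteq> 0\<close> \<open>\<gamma> \<noteq> 1\<close> by (simp add: shift0 b_def cyc3_def)
  moreover have "inverse (cyc3 \<gamma> (x1 + a)) + c * inverse (cyc3 \<gamma> x1) = b"
  proof -
    have "D / (\<gamma> * t) + c * (D / (\<gamma> * (t * (t + c)))) = D / (\<gamma> * (t + c))"
    proof -
      let ?k = "D / (\<gamma> * (t * (t + c)))"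
      have "D / (\<gamma> * t) = ?k * (t + c)" using t by simp
      then have "D / (\<gamma> * t) + c * ?k = ?k * (t + c) + ?k * c" by (simp only: mult.commute[of c])
      also have "\<dots> = ?k * (t + c + c)" by (simp only: distrib_left)
      also have "t + c + c = t" using char2_add_self[OF char2, of c] by (simp add: add.assoc)
      finally show ?thesis using t by simp
    qed
    then show ?thesis
      using fixed[of t] fixed[of "t * (t + c)"] unfolding shift1 by (simp add: x1_def b_def)
  qed
  moreover have "inverse (cyc3 \<gamma> (x2 + a)) + c * inverse (cyc3 \<gamma> x2) = b"
  proof -
    have "D / (\<gamma> * ((t + c) * (t + 1 + c))) + c * (D / (\<gamma> * (c * (t + 1 + c)))) = D / (\<gamma> * (t + c))"
    proof -
      let ?k = "D / (\<gamma> * ((t + c) * (t + 1 + c)))"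
      have "c * (D / (\<gamma> * (c * (t + 1 + c)))) = ?k * (t + c)" using t \<open>c \<noteq> 0\<close> by simp
      then have "?k + c * (D / (\<gamma> * (c * (t + 1 + c)))) = ?k * (t + 1 + c)"
        by (simp add: distrib_left add.assoc)
      then show ?thesis using t by simp
    qed
    then show ?thesis
      using fixed[of "c * (t + 1 + c)"] fixed[of "(t + c) * (t + 1 + c)"] unfolding shift2
      by (simp add: x2_def b_def)
  qed
  ultimately have "{\<gamma>, x1, x2} \<subseteq> {x. inverse (cyc3 \<gamma> (x + a)) + c * inverse (cyc3 \<gamma> x) = b}"
    by simp
  moreover have "card {\<gamma>, x1, x2} = 3"
  proof -
    have "x1 \<noteq> \<gamma>" "x2 \<noteq> \<gamma>"
      using u[of "t * (t + c)"] u[of "c * (t + 1 + c)"] \<open>\<gamma> \<noteq> 0\<close> \<open>D \<noteq> 0\<close>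
      by (auto simp: x1_def x2_def divide_eq_eq)
    moreover have "x1 \<noteq> x2" using t \<open>\<gamma> \<noteq> 0\<close> by (simp add: x1_def x2_def)
    ultimately show ?thesis by simp
  qed
  ultimately have "3 \<le> card {x. inverse (cyc3 \<gamma> (x + a)) + c * inverse (cyc3 \<gamma> x) = b}"
    by (metis card_mono finite)
  then show ?thesis by (simp add: cDeltaAt_def a_def b_def)
qed
section \<open>The field with 16 elements\<close>

lemma ex_root_X4_X_1:
  assumes "CARD('a::{field,finite}) = 16" and char2: "1 + 1 = (0::'a)"
  shows "\<exists>\<alpha>::'a. \<alpha>^4 + \<alpha> + 1 = 0"
proof (rule ccontr)
  assume no_root: "\<nexists>\<alpha>::'a. \<alpha>^4 + \<alpha> + 1 = 0"
  define H :: "'a poly" where "H = [:0, 1, 1, 1, 1, 0, 1, 0, 1, 1, 0, 0, 1:]"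
  have "poly H x = 0" for x
  proof -
    have "poly H x * (x^4 + x + 1) = x^16 + x + 2 * (x^2 + x^3 + x^4 + x^5 + x^6 + x^7 + x^8 + x^9 + x^10 + x^12 + x^13)"
      unfolding H_def by simp algebra
    also have "\<dots> = 0"
      using char2 char2_add_self[OF char2, of x] power_card_eq_self[of x] assms(1) by simp
    finally show ?thesis using no_root by auto
  qed
  then have "card {x. poly H x = 0} = 16" using assms(1) by simp
  moreover have "card {x. poly H x = 0} \<le> degree H"
    by (rule card_poly_roots_bound) (simp add: H_def)
  moreover have "degree H = 12" by (simp add: H_def)
  ultimately show False by simp
qed

type_synonym gf16 = "bool \<times> bool \<times> bool \<times> bool"

abbreviation gf16_zero :: gf16 where "gf16_zero \<equiv> (False, False, False, False)"
abbreviation gf16_one :: gf16 where "gf16_one \<equiv> (True, False, False, False)"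

definition gf16_embed :: "'a::field \<Rightarrow> gf16 \<Rightarrow> 'a" where
  "gf16_embed \<alpha> = (\<lambda>(p0, p1, p2, p3).
     of_bool p0 + of_bool p1 * \<alpha> + of_bool p2 * \<alpha>^2 + of_bool p3 * \<alpha>^3)"

definition gf16_add :: "gf16 \<Rightarrow> gf16 \<Rightarrow> gf16" where
  "gf16_add = (\<lambda>(p0, p1, p2, p3) (q0, q1, q2, q3). (p0 \<noteq> q0, p1 \<noteq> q1, p2 \<noteq> q2, p3 \<noteq> q3))"

text \<open>Schoolbook product of the coefficient vectors, reduced by \<open>\<alpha>^4 = \<alpha> + 1\<close>.\<close>
definition gf16_mul :: "gf16 \<Rightarrow> gf16 \<Rightarrow> gf16" where
  "gf16_mul = (\<lambda>(x0, x1, x2, x3) (y0, y1, y2, y3).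
     (let c0 = (x0 \<and> y0);
          c1 = ((x0 \<and> y1) \<noteq> (x1 \<and> y0));
          c2 = (((x0 \<and> y2) \<noteq> (x1 \<and> y1)) \<noteq> (x2 \<and> y0));
          c3 = ((((x0 \<and> y3) \<noteq> (x1 \<and> y2)) \<noteq> (x2 \<and> y1)) \<noteq> (x3 \<and> y0));
          c4 = (((x1 \<and> y3) \<noteq> (x2 \<and> y2)) \<noteq> (x3 \<and> y1));
          c5 = ((x2 \<and> y3) \<noteq> (x3 \<and> y2));
          c6 = (x3 \<and> y3)
      in (c0 \<noteq> c4, (c1 \<noteq> c4) \<noteq> c5, (c2 \<noteq> c5) \<noteq> c6, c3 \<noteq> c6)))"

fun gf16_inverse :: "gf16 \<Rightarrow> gf16" where
  "gf16_inverse (False, False, False, False) = (False, False, False, False)"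
| "gf16_inverse (True, False, False, False) = (True, False, False, False)"
| "gf16_inverse (False, True, False, False) = (True, False, False, True)"
| "gf16_inverse (True, True, False, False) = (False, True, True, True)"
| "gf16_inverse (False, False, True, False) = (True, False, True, True)"
| "gf16_inverse (True, False, True, False) = (True, True, False, True)"
| "gf16_inverse (False, True, True, False) = (True, True, True, False)"
| "gf16_inverse (True, True, True, False) = (False, True, True, False)"
| "gf16_inverse (False, False, False, True) = (True, True, True, True)"
| "gf16_inverse (True, False, False, True) = (False, True, False, False)"
| "gf16_inverse (False, True, False, True) = (False, False, True, True)"
| "gf16_inverse (True, True, False, True) = (True, False, True, False)"
| "gf16_inverse (False, False, True, True) = (False, True, False, True)"
| "gf16_inverse (True, False, True, True) = (False, False, True, False)"
| "gf16_inverse (False, True, True, True) = (True, True, False, False)"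
| "gf16_inverse (True, True, True, True) = (False, False, False, True)"

definition gf16_cyc3 :: "gf16 \<Rightarrow> gf16 \<Rightarrow> gf16" where
  "gf16_cyc3 g x =
     (if x = gf16_zero then gf16_one else if x = gf16_one then g else if x = g then gf16_zero else x)"

definition gf16_cdiff :: "gf16 \<Rightarrow> gf16 \<Rightarrow> gf16 \<Rightarrow> gf16 \<Rightarrow> gf16" where
  "gf16_cdiff g c a x = gf16_add (gf16_inverse (gf16_cyc3 g (gf16_add x a)))
     (gf16_mul c (gf16_inverse (gf16_cyc3 g x)))"

lemma of_bool_neq_char2:
  assumes "1 + 1 = (0::'a::comm_ring_1)"
  shows "(of_bool (p \<noteq> q) :: 'a) = of_bool p + of_bool q"
  using assms by (cases p; cases q) simp_all

lemma gf16_embed_add: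
  fixes \<alpha> :: "'a::field"
  assumes char2: "1 + 1 = (0::'a)"
  shows "gf16_embed \<alpha> (gf16_add u v) = gf16_embed \<alpha> u + gf16_embed \<alpha> v"
proof -
  obtain p0 p1 p2 p3 q0 q1 q2 q3 where u: "u = (p0, p1, p2, p3)" and v: "v = (q0, q1, q2, q3)"
    by (cases u; cases v) auto
  show ?thesis
    unfolding u v gf16_embed_def gf16_add_def
    by (simp only: prod.case of_bool_neq_char2[OF char2]) algebra
qed

lemma gf16_embed_mul:
  fixes \<alpha> :: "'a::field"
  assumes char2: "1 + 1 = (0::'a)" and root: "\<alpha>^4 + \<alpha> + 1 = 0"
  shows "gf16_embed \<alpha> (gf16_mul u v) = gf16_embed \<alpha> u * gf16_embed \<alpha> v"
proof -
  have reduce: "(X0 + X1 * \<alpha> + X2 * \<alpha>^2 + X3 * \<alpha>^3) * (Y0 + Y1 * \<alpha> + Y2 * \<alpha>^2 + Y3 * \<alpha>^3)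
    = (X0 * Y0 + (X1 * Y3 + X2 * Y2 + X3 * Y1))
      + (X0 * Y1 + X1 * Y0 + (X1 * Y3 + X2 * Y2 + X3 * Y1) + (X2 * Y3 + X3 * Y2)) * \<alpha>
      + (X0 * Y2 + X1 * Y1 + X2 * Y0 + (X2 * Y3 + X3 * Y2) + X3 * Y3) * \<alpha>^2
      + (X0 * Y3 + X1 * Y2 + X2 * Y1 + X3 * Y0 + X3 * Y3) * \<alpha>^3" for X0 X1 X2 X3 Y0 Y1 Y2 Y3
    using root char2_add_self[OF char2, of "(X1 * Y3 + X2 * Y2 + X3 * Y1) + (X2 * Y3 + X3 * Y2) * \<alpha> + X3 * Y3 * \<alpha>^2"]
    by algebra
  obtain p0 p1 p2 p3 q0 q1 q2 q3 where u: "u = (p0, p1, p2, p3)" and v: "v = (q0, q1, q2, q3)"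
    by (cases u; cases v) auto
  show ?thesis
    unfolding u v gf16_embed_def gf16_mul_def Let_def
    by (simp only: prod.case reduce of_bool_neq_char2[OF char2] of_bool_conj)
qed

lemma gf16_mul_inverse: "u \<noteq> gf16_zero \<Longrightarrow> gf16_mul u (gf16_inverse u) = gf16_one"
  by (cases u rule: gf16_inverse.cases) (simp_all add: gf16_mul_def)

lemma gf16_embed_zero [simp]: "gf16_embed \<alpha> gf16_zero = 0"
  by (simp add: gf16_embed_def)

lemma gf16_embed_one [simp]: "gf16_embed \<alpha> gf16_one = 1"
  by (simp add: gf16_embed_def)

lemma gf16_embed_eq_0_iff:
  fixes \<alpha> :: "'a::field"
  assumes char2: "1 + 1 = (0::'a)" and root: "\<alpha>^4 + \<alpha> + 1 = 0"
  shows "gf16_embed \<alpha> u = 0 \<longleftrightarrow> u = gf16_zero"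
proof
  assume "gf16_embed \<alpha> u = 0"
  then have "gf16_embed \<alpha> (gf16_mul u (gf16_inverse u)) = 0"
    by (simp add: gf16_embed_mul[OF char2 root])
  then show "u = gf16_zero" using gf16_mul_inverse[of u] by fastforce
qed simp

lemma gf16_embed_inverse:
  fixes \<alpha> :: "'a::field"
  assumes char2: "1 + 1 = (0::'a)" and root: "\<alpha>^4 + \<alpha> + 1 = 0"
  shows "gf16_embed \<alpha> (gf16_inverse u) = inverse (gf16_embed \<alpha> u)"
proof (cases "u = gf16_zero")
  case False
  then have "gf16_embed \<alpha> u * gf16_embed \<alpha> (gf16_inverse u) = 1"
    by (simp add: gf16_mul_inverse flip: gf16_embed_mul[OF char2 root])
  then show ?thesis by (rule inverse_unique[symmetric])
qed simp

lemma inj_gf16_embed: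
  fixes \<alpha> :: "'a::field"
  assumes char2: "1 + 1 = (0::'a)" and root: "\<alpha>^4 + \<alpha> + 1 = 0"
  shows "inj (gf16_embed \<alpha>)"
proof (rule injI)
  fix u v assume "gf16_embed \<alpha> u = gf16_embed \<alpha> v"
  then have "gf16_embed \<alpha> (gf16_add u v) = 0"
    by (simp add: gf16_embed_add[OF char2] char2_add_self[OF char2])
  then have "gf16_add u v = gf16_zero" by (simp add: gf16_embed_eq_0_iff[OF char2 root])
  then show "u = v" by (cases u; cases v) (simp add: gf16_add_def)
qed

lemma surj_gf16_embed:
  fixes \<alpha> :: "'a::{field,finite}"
  assumes "CARD('a) = 16" and char2: "1 + 1 = (0::'a)" and root: "\<alpha>^4 + \<alpha> + 1 = 0"
  shows "surj (gf16_embed \<alpha>)"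
proof -
  have "CARD(gf16) = 16" by (simp flip: UNIV_Times_UNIV add: card_cartesian_product)
  then have "card (range (gf16_embed \<alpha>)) = CARD('a)"
    using assms(1) inj_gf16_embed[OF char2 root] by (simp add: card_image)
  then show ?thesis by (simp add: card_subset_eq)
qed

lemma gf16_embed_cdiff:
  fixes \<alpha> :: "'a::field"
  assumes char2: "1 + 1 = (0::'a)" and root: "\<alpha>^4 + \<alpha> + 1 = 0"
  defines "E \<equiv> gf16_embed \<alpha>"
  shows "E (gf16_cdiff g c a x) =
    inverse (cyc3 (E g) (E x + E a)) + E c * inverse (cyc3 (E g) (E x))"
proof -
  have E_eq: "E u = E v \<longleftrightarrow> u = v" for u v
    using inj_gf16_embed[OF char2 root] unfolding E_def inj_def by blast
  have "E (gf16_cyc3 g y) = cyc3 (E g) (E y)" for y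
    using E_eq[of y gf16_zero] E_eq[of y gf16_one] E_eq[of y g]
    unfolding gf16_cyc3_def cyc3_def by (simp add: E_def)
  then show ?thesis
    by (simp add: gf16_cdiff_def E_def gf16_embed_add[OF char2] gf16_embed_mul[OF char2 root]
      gf16_embed_inverse[OF char2 root])
qed

definition gf16_of_nat :: "nat \<Rightarrow> gf16" where
  "gf16_of_nat n = (odd n, odd (n div 2), odd (n div 4), odd (n div 8))"

definition nat_of_gf16 :: "gf16 \<Rightarrow> nat" where
  "nat_of_gf16 = (\<lambda>(p0, p1, p2, p3). of_bool p0 + 2 * of_bool p1 + 4 * of_bool p2 + 8 * of_bool p3)"

text \<open>Found by exhaustive search: the entry in row \<open>g - 2\<close> and column \<open>c - 2\<close> (elements coded
  as numbers below 16 by \<^const>\<open>nat_of_gf16\<close>) is a shift \<open>a\<close> together with three points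
  \<open>x, y, z\<close> on which \<^term>\<open>gf16_cdiff g c a\<close> takes the same value.\<close>
definition gf16_witness_table :: "(nat \<times> nat \<times> nat \<times> nat) list list" where
  "gf16_witness_table = [
    [(1,0,7,9), (1,1,9,12), (3,3,8,15), (1,0,5,10), (1,1,3,5), (1,0,2,4), (2,2,5,14),
     (1,3,11,15), (1,1,10,13), (1,3,7,10), (1,3,6,9), (3,0,11,12), (1,0,8,13), (2,0,7,12)],
    [(1,1,10,14), (1,3,9,12), (1,3,6,13), (2,2,8,15), (1,1,2,4), (1,0,3,5), (2,0,5,14),
     (1,0,11,15), (1,0,10,13), (2,0,10,13), (1,1,11,12), (1,1,5,13), (1,2,8,13), (2,1,5,15)],
    [(1,4,7,9), (3,2,10,12), (1,0,6,13), (1,1,13,15), (1,0,3,4), (1,1,2,5), (1,1,8,14),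
     (1,5,6,8), (2,3,12,15), (1,0,12,14), (2,1,13,14), (1,5,9,10), (3,1,9,15), (1,0,9,15)],
    [(2,3,10,12), (1,0,3,15), (1,1,8,11), (1,5,13,15), (1,0,2,5), (1,1,3,4), (1,4,7,11),
     (2,1,8,14), (2,5,11,13), (1,4,12,14), (2,7,9,15), (1,0,9,10), (1,1,2,14), (1,1,9,15)],
    [(1,3,6,11), (1,2,6,13), (1,7,8,11), (1,7,13,15), (1,0,11,13), (1,7,9,14), (1,1,9,13),
     (1,2,7,10), (2,4,12,15), (1,6,12,14), (2,6,13,14), (1,6,9,10), (1,3,7,12), (1,0,8,12)],
    [(1,6,10,14), (1,6,9,12), (1,5,7,9), (1,4,7,14), (1,6,11,13), (1,0,9,14), (2,2,4,10),
     (1,7,11,15), (1,1,9,11), (1,5,6,15), (1,0,8,10), (1,4,6,8), (1,7,8,13), (2,0,6,8)],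
    [(1,4,8,13), (1,1,5,11), (2,3,6,15), (1,1,4,14), (1,5,8,14), (1,4,9,15), (1,7,8,11),
     (1,5,9,12), (1,0,6,14), (1,1,2,6), (1,1,7,15), (2,1,4,13), (1,0,4,10), (1,6,9,10)],
    [(4,5,6,8), (1,4,6,9), (1,1,6,8), (1,0,4,14), (1,1,2,12), (1,0,3,13), (1,1,7,11),
     (4,0,8,9), (1,8,12,15), (1,1,5,15), (1,2,4,8), (1,0,7,9), (1,5,7,8), (1,8,11,14)],
    [(2,3,5,6), (1,1,2,13), (1,1,3,14), (1,2,9,10), (1,2,11,12), (1,3,10,13), (1,1,6,12),
     (2,1,4,7), (1,6,10,14), (1,3,8,11), (1,7,11,15), (1,0,2,15), (1,0,3,12), (1,0,7,13)],
    [(1,1,7,9), (1,0,2,13), (1,2,7,11), (2,3,7,10), (1,0,4,9), (1,1,5,8), (1,2,5,10),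
     (1,0,6,8), (1,1,6,14), (2,0,10,11), (1,1,2,4), (1,3,6,10), (1,1,3,12), (1,8,10,12)],
    [(1,1,3,11), (2,1,4,9), (1,3,12,14), (1,1,2,9), (1,3,10,13), (1,2,11,12), (1,0,7,11),
     (1,0,2,10), (1,7,8,13), (1,0,3,8), (1,6,9,12), (1,2,13,15), (2,3,6,11), (1,1,6,10)],
    [(1,0,3,11), (1,1,7,12), (2,4,14,15), (1,3,7,13), (1,0,5,14), (1,1,4,15), (1,2,5,13),
     (1,1,2,10), (1,9,11,12), (1,2,6,12), (1,1,6,9), (2,6,12,13), (1,0,6,13), (1,11,13,14)],
    [(1,5,6,14), (4,3,10,11), (1,0,5,9), (1,1,6,11), (1,1,3,10), (1,0,2,11), (1,1,2,5),
     (1,4,7,15), (1,9,11,14), (1,0,7,10), (1,2,4,14), (1,1,4,8), (4,4,5,9), (1,1,7,13)],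
    [(1,1,4,13), (1,5,11,15), (1,1,5,9), (2,5,12,13), (1,4,9,15), (1,5,8,14), (1,6,12,14),
     (1,0,5,12), (1,1,7,8), (2,7,14,15), (1,0,6,9), (1,1,3,6), (1,4,10,14), (1,7,13,15)]
  ]"

definition gf16_witness :: "gf16 \<Rightarrow> gf16 \<Rightarrow> gf16 \<times> gf16 \<times> gf16 \<times> gf16" where
  "gf16_witness g c = map_prod gf16_of_nat (map_prod gf16_of_nat (map_prod gf16_of_nat gf16_of_nat))
     (gf16_witness_table ! (nat_of_gf16 g - 2) ! (nat_of_gf16 c - 2))"

lemma gf16_witness_correct:
  assumes "g \<notin> {gf16_zero, gf16_one}" and "c \<notin> {gf16_zero, gf16_one}"
  shows "case gf16_witness g c of (a, x, y, z) \<Rightarrow>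
    distinct [x, y, z] \<and> gf16_cdiff g c a y = gf16_cdiff g c a x \<and> gf16_cdiff g c a z = gf16_cdiff g c a x"
proof -
  obtain g0 g1 g2 g3 c0 c1 c2 c3 where "g = (g0, g1, g2, g3)" "c = (c0, c1, c2, c3)"
    by (cases g; cases c) auto
  with assms show ?thesis
    by (cases g0; cases g1; cases g2; cases g3; cases c0; cases c1; cases c2; cases c3)
      (simp_all add: gf16_witness_def gf16_witness_table_def gf16_of_nat_def nat_of_gf16_def
        gf16_cdiff_def gf16_cyc3_def gf16_add_def gf16_mul_def)
qed

lemma three_solutions_card_16:
  fixes c \<gamma> :: "'a::{field,finite}"
  assumes "CARD('a) = 16" and char2: "1 + 1 = (0::'a)"
    and "c \<noteq> 0" "c \<noteq> 1" "\<gamma> \<noteq> 0" "\<gamma> \<noteq> 1"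
  shows "\<exists>a b. 3 \<le> cDeltaAt (inverse \<circ> cyc3 \<gamma>) c a b"
proof -
  obtain \<alpha> :: 'a where root: "\<alpha>^4 + \<alpha> + 1 = 0"
    using ex_root_X4_X_1[OF assms(1) char2] by blast
  let ?E = "gf16_embed \<alpha>"
  have inj: "inj ?E" by (rule inj_gf16_embed[OF char2 root])
  obtain g c' where g: "\<gamma> = ?E g" and c': "c = ?E c'"
    using surj_gf16_embed[OF assms(1) char2 root] by (metis surjD)
  have "g \<notin> {gf16_zero, gf16_one}" "c' \<notin> {gf16_zero, gf16_one}"
    using assms(3-6) g c' by auto
  moreover obtain a x y z where "gf16_witness g c' = (a, x, y, z)"
    by (cases "gf16_witness g c'") auto
  ultimately have "distinct [x, y, z]"
    and same: "gf16_cdiff g c' a y = gf16_cdiff g c' a x" "gf16_cdiff g c' a z = gf16_cdiff g c' a x"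
    using gf16_witness_correct[of g c'] by simp_all
  define b where "b = ?E (gf16_cdiff g c' a x)"
  have embed_cdiff: "(inverse \<circ> cyc3 \<gamma>) (?E u + ?E a) + c * (inverse \<circ> cyc3 \<gamma>) (?E u) = ?E (gf16_cdiff g c' a u)"
    for u by (simp add: g c' gf16_embed_cdiff[OF char2 root])
  have "{?E x, ?E y, ?E z} \<subseteq> {v. (inverse \<circ> cyc3 \<gamma>) (v + ?E a) + c * (inverse \<circ> cyc3 \<gamma>) v = b}"
    using same by (simp only: embed_cdiff b_def mem_Collect_eq insert_subset empty_subsetI simp_thms)
  then have "card {?E x, ?E y, ?E z} \<le> cDeltaAt (inverse \<circ> cyc3 \<gamma>) c (?E a) b"
    unfolding cDeltaAt_def by (intro card_mono) simp_all
  moreover have "card {?E x, ?E y, ?E z} = 3"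
    using \<open>distinct [x, y, z]\<close> by (simp add: inj_eq[OF inj])
  ultimately show ?thesis by (metis le_trans)
qed

theorem mainTheorem6:
  fixes c \<gamma> :: "'a::{field,finite}" and n :: nat
  assumes "CARD('a) = 2 ^ n" and "n \<ge> 4"
    and "(1::'a) + 1 = 0"
    and "c \<noteq> 0" and "c \<noteq> 1" and "\<gamma> \<noteq> 0" and "\<gamma> \<noteq> 1"
  shows "3 \<le> cDelta (Inv \<circ> cyc3 \<gamma>) c \<and> cDelta (Inv \<circ> cyc3 \<gamma>) c \<le> 5"
proof -
  have "(2::nat) ^ 4 \<le> 2 ^ n" using assms(2) by (rule power_increasing) simp
  then have F: "Inv \<circ> cyc3 \<gamma> = inverse \<circ> cyc3 \<gamma>"
    using assms(1) by (simp add: fun_eq_iff Inv_eq_inverse)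
  have "\<exists>a b. 3 \<le> cDeltaAt (inverse \<circ> cyc3 \<gamma>) c a b"
  proof (cases "n = 4")
    case True
    with assms show ?thesis by (intro three_solutions_card_16) simp_all
  next
    case False
    with assms(2) have "(2::nat) ^ 5 \<le> 2 ^ n" by (intro power_increasing) simp_all
    with assms(1) have "30 < CARD('a)" by simp
    then obtain t where "admissible_parameter c \<gamma> t"
      using ex_admissible_parameter[OF assms(4,7)] by blast
    from three_solutions_of_admissible[OF assms(3,4,6,7) this] show ?thesis by blast
  qed
  then have "3 \<le> cDelta (inverse \<circ> cyc3 \<gamma>) c"
    using le_cDelta[OF disjI2[OF assms(5)]] by blast
  moreover have "cDelta (inverse \<circ> cyc3 \<gamma>) c \<le> 5"
    by (rule cDelta_le) (rule cDeltaAt_inverse_cyc3_le_5[OF assms(3-7)])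
  ultimately show ?thesis by (simp add: F)
qed

end
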